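(* Assume $q \in D_0$ and, for each $i\in\{1,2\}$, $q\bmod n_i$ is a quadratic residue modulo $n_i$. For $(i,j,h)\in\{0,1\}^3$ let $\mathcal{D}_{(i,j,h)}$ be the cyclic code of length $n$ over $\mathrm{GF}(q)$ with generator polynomial $d_i(x)d_j^{(n_1)}(x)d_h^{(n_2)}(x)$. Then each $\mathcal{D}_{(i,j,h)}$ has length $n$ and dimension $(n+1)/2$, and its minimum odd-like weight $d_{(i,j,h)}$ satisfies $d_{(i,j,h)}\ge\sqrt n$. Moreover, if $n_1\equiv -1\pmod 8$ and $n_2\equiv -1\pmod 8$, then $d_{(i,j,h)}^2-d_{(i,j,h)}+1\ge n$.
   Context: Let $n_1,n_2$ be distinct odd primes, $n=n_1n_2$, and let $q$ be a prime power with $\gcd(q,n)=1$. Let $d=\gcd(n_1-1,n_2-1)$ and $e=(n_1-1)(n_2-1)/d$. Let $g_1,g_2$ be primitive roots modulo $n_1,n_2$ respectively, let $g$ be the integer modulo $n$ with $g\equiv g_1 \pmod{n_1}$, $g\equiv g_2\pmod{n_2}$, and let $\nu$ be the integer modulo $n$ with $\nu\equiv g\pmod{n_1}$, $\nu\equiv 1\pmod{n_2}$. It is known that every element of $\mathbb{Z}_n^*$ can be written uniquely as $g^s\nu^i$ with $0\le s\le e-1$, $0\le i\le d-1$. Define $D_0=\{g^{2s}\nu^i: 0\le s\le (e-2)/2,\ 0\le i\le d-1\}$ and $D_1=\{g^{2s+1}\nu^i: 0\le s\le (e-2)/2,\ 0\le i\le d-1\}$. For $j\in\{1,2\}$ let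 $D_0^{(n_j)}$, $D_1^{(n_j)}$ be the sets of quadratic residues and nonresidues modulo $n_j$. Let $N=\mathrm{ord}_n(q)$ and $\theta$ a primitive $n$-th root of unity in $\mathrm{GF}(q^N)$. Define $d_i(x)=\prod_{j\in D_i}(x-\theta^j)$, $d_i^{(n_1)}(x)=\prod_{j\in D_i^{(n_1)}}(x-\theta^{n_2 j})$, $d_i^{(n_2)}(x)=\prod_{j\in D_i^{(n_2)}}(x-\theta^{n_1 j})$ for $i\in\{0,1\}$; under the hypotheses these lie in $\mathrm{GF}(q)[x]$. Cyclic codes of length $n$ are identified with ideals of $\mathrm{GF}(q)[x]/(x^n-1)$. A codeword $(c_0,\dots,c_{n-1})$ is odd-like if $\sum_i c_i\neq 0$; the minimum odd-like weight is the minimum Hamming weight of odd-like codewords. *)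

theory Defs
  imports "HOL-Number_Theory.Number_Theory" "HOL-Computational_Algebra.Polynomial"
begin

definition dd :: "nat \<Rightarrow> nat \<Rightarrow> nat" where
  "dd n1 n2 = gcd (n1 - 1) (n2 - 1)"

definition ee :: "nat \<Rightarrow> nat \<Rightarrow> nat" where
  "ee n1 n2 = (n1 - 1) * (n2 - 1) div dd n1 n2"

(* D_0 (b = 0) and D_1 (b = 1), as sets of residues in {0..<n1*n2} *)
definition Dset :: "nat \<Rightarrow> nat \<Rightarrow> nat \<Rightarrow> nat \<Rightarrow> nat \<Rightarrow> nat set" where
  "Dset n1 n2 g \<nu> b = {(g ^ (2 * s + b) * \<nu> ^ i) mod (n1 * n2) | s i.
      s \<le> (ee n1 n2 - 2) div 2 \<and> i \<le> dd n1 n2 - 1}"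

definition QRset :: "nat \<Rightarrow> nat \<Rightarrow> nat set" where
  "QRset p b = {a. 0 < a \<and> a < p \<and>
      (if b = 0 then QuadRes (int p) (int a) else \<not> QuadRes (int p) (int a))}"

definition rootprod :: "'b::field \<Rightarrow> nat set \<Rightarrow> nat \<Rightarrow> 'b poly" where
  "rootprod \<theta> S m = (\<Prod>j\<in>S. [:- (\<theta> ^ (m * j)), 1:])"

(* cyclic code of length n with generator polynomial gp: the ideal (gp) in F[x]/(x^n-1),
   codewords represented by their reduced polynomials c, i.e. (c_0,...,c_{n-1}) = coefficients *)
definition cyclic_code :: "nat \<Rightarrow> 'a::field poly \<Rightarrow> 'a poly set" where
  "cyclic_code n gp = {(a * gp) mod (monom 1 n - 1) | a. True}"

definition hweight :: "nat \<Rightarrow> 'a::zero poly \<Rightarrow> nat" where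
  "hweight n c = card {i. i < n \<and> coeff c i \<noteq> 0}"

definition odd_like :: "nat \<Rightarrow> 'a::comm_monoid_add poly \<Rightarrow> bool" where
  "odd_like n c \<longleftrightarrow> (\<Sum>i<n. coeff c i) \<noteq> 0"

definition min_odd_like_weight :: "nat \<Rightarrow> 'a::field poly set \<Rightarrow> nat" where
  "min_odd_like_weight n C = Min {hweight n c | c. c \<in> C \<and> odd_like n c}"

definition code_dim :: "'a::field poly set \<Rightarrow> nat" where
  "code_dim C = vector_space.dim smult C"

end

theory Submission
  imports Defs
begin

text \<open>
  The defining set \<open>Z\<close> of \<open>D_(i,j,h)\<close>, i.e. the set of exponents \<open>k\<close> with \<open>\<theta>^k\<close> a root of the
  generator, is \<open>D_i\<close> together with \<open>n2\<close> resp. \<open>n1\<close> times the quadratic residues or nonresidues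
  modulo \<open>n1\<close> resp. \<open>n2\<close>; it has \<open>(n - 1)/2\<close> elements, which gives the dimension.
  The element \<open>g\<close> is a nonresidue modulo both primes, so multiplication by \<open>g\<close> swaps \<open>D_0\<close> with
  \<open>D_1\<close> and residues with nonresidues: every nonzero exponent outside \<open>Z\<close> is moved into \<open>Z\<close>.
  Hence for an odd-like codeword \<open>c\<close> of minimum odd-like weight \<open>w\<close> the product
  \<open>c(x) c(x^g) mod (x^n - 1)\<close> vanishes at every \<open>\<theta>^k\<close> with \<open>k \<noteq> 0\<close> but not at \<open>1\<close>, so it is a
  nonzero multiple of \<open>1 + x + ... + x^(n-1)\<close> and has weight \<open>n\<close>; but its weight is at most \<open>w^2\<close>.
  If both primes are \<open>3 mod 4\<close>, then \<open>-1\<close> is a nonresidue modulo both as well, and in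
  \<open>c(x) c(x^-1)\<close> the \<open>w\<close> diagonal products all fall on the constant term, so \<open>n \<le> w^2 - w + 1\<close>.

  The hypotheses on \<open>q\<close> and on the size of the extension field only serve to put the generator
  polynomials into \<open>GF(q)[x]\<close>; the statement assumes this directly through \<open>gen\<close>.
\<close>

section \<open>Legendre symbol and quadratic residues\<close>

lemma Legendre_cong:
  assumes "[a = b] (mod p)"
  shows "Legendre a p = Legendre b p"
proof -
  have "QuadRes p a = QuadRes p b" "[a = 0] (mod p) = [b = 0] (mod p)"
    unfolding QuadRes_def using assms by (meson cong_sym cong_trans)+
  then show ?thesis unfolding Legendre_def by simp
qed

lemma Legendre_mod_dvd:
  assumes "p dvd m"
  shows "Legendre (int (x mod m)) (int p) = Legendre (int x) (int p)"
proof (rule Legendre_cong)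
  have "[x mod m = x] (mod p)" using assms by (metis cong_dvd_modulus_nat cong_mod_left cong_refl)
  then show "[int (x mod m) = int x] (mod int p)" by (simp add: cong_int_iff)
qed

lemma Legendre_coprime:
  assumes "prime p" "coprime a p"
  shows "Legendre (int a) (int p) \<in> {1, -1}"
proof -
  have "\<not> p dvd a" using assms by (metis coprime_absorb_right coprime_commute not_prime_unit)
  then have "\<not> [int a = 0] (mod int p)" by (metis cong_0_iff int_dvd_int_iff)
  then show ?thesis unfolding Legendre_def by auto
qed

text \<open>Euler's criterion determines the symbol modulo \<open>p\<close>, and two values in \<open>{-1,0,1}\<close>
  that are congruent modulo \<open>p > 2\<close> are equal.\<close>

lemma Legendre_mult:
  assumes "prime (p::nat)" "2 < p"
  shows "Legendre (a * b) p = Legendre a p * Legendre b p"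
proof -
  define D where "D = Legendre (a * b) p - Legendre a p * Legendre b p"
  have "[Legendre (a * b) p = (a * b) ^ ((p - 1) div 2)] (mod p)"
    using euler_criterion[OF assms] by blast
  moreover have "[Legendre a p * Legendre b p = a ^ ((p - 1) div 2) * b ^ ((p - 1) div 2)] (mod p)"
    using euler_criterion[OF assms, of a] euler_criterion[OF assms, of b] by (rule cong_mult)
  ultimately have "int p dvd D"
    unfolding D_def power_mult_distrib cong_iff_dvd_diff[symmetric] by (meson cong_sym cong_trans)
  moreover have "\<bar>D\<bar> < int p"
  proof -
    have L: "\<bar>Legendre x p\<bar> \<le> 1" for x by (simp add: Legendre_def)
    then have "\<bar>Legendre a p * Legendre b p\<bar> \<le> 1" by (simp add: abs_mult mult_le_one)
    then show ?thesis unfolding D_def using L[of "a * b"] assms(2) by linarith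
  qed
  ultimately have "D = 0" using dvd_imp_le_int by force
  then show ?thesis by (simp add: D_def)
qed

lemma Legendre_power:
  assumes "prime (p::nat)" "2 < p"
  shows "Legendre (a ^ k) p = Legendre a p ^ k"
proof (induction k)
  case 0
  have "QuadRes p 1" unfolding QuadRes_def by (rule exI[of _ 1]) simp
  moreover have "\<not> [1 = 0] (mod int p)" using assms(2) by (simp add: cong_def)
  ultimately show ?case unfolding Legendre_def by simp
next
  case (Suc k)
  then show ?case using Legendre_mult[OF assms, of a "a ^ k"] by simp
qed

lemma Legendre_primroot:
  assumes "prime p" "2 < p" "residue_primroot p r"
  shows "Legendre (int r) (int p) = -1"
proof (rule ccontr)
  assume "Legendre (int r) (int p) \<noteq> -1"
  then have "Legendre (int r) (int p) = 1"
    using Legendre_coprime[OF assms(1), of r] assms(3) by (auto simp: residue_primroot_def coprime_commute)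
  then have "[int r ^ ((p - 1) div 2) = 1] (mod int p)"
    using euler_criterion[OF assms(1,2), of "int r"] by (simp add: cong_sym)
  then have "[r ^ ((p - 1) div 2) = 1] (mod p)"
    by (metis cong_int_iff of_nat_1 of_nat_power)
  then have "p - 1 dvd (p - 1) div 2"
    using assms by (simp add: ord_divides' residue_primroot_def totient_prime)
  then show False using assms(2) by (auto dest: dvd_imp_le)
qed

lemma Legendre_minus_one_3_mod_4:
  assumes "prime (p::nat)" "p mod 4 = 3"
  shows "Legendre (-1) p = -1"
proof -
  have p: "2 < p" using assms prime_ge_2_nat[OF assms(1)] by (cases "p = 2") auto
  have "odd ((p - 1) div 2)"
  proof -
    obtain k where "p = 4 * k + 3" using assms(2) by (metis div_mod_decomp mult.commute)
    then show ?thesis by simp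
  qed
  then have "[Legendre (-1) p = -1] (mod p)" using euler_criterion[OF assms(1) p, of "-1"] by simp
  then have "int p dvd Legendre (-1) p + 1" by (simp add: cong_iff_dvd_diff)
  moreover have "Legendre (-1) p \<in> {-1, 0, 1}" by (auto simp: Legendre_def)
  moreover have "\<not> int p dvd 1" "\<not> int p dvd 2" using p by (auto dest: zdvd_imp_le)
  ultimately show ?thesis by auto
qed

lemma Legendre_pred_multiple_3_mod_4:
  assumes "prime p" "p mod 4 = 3" "p dvd N" "0 < N"
  shows "Legendre (int (N - 1)) (int p) = -1"
proof -
  have "[int N = 0] (mod int p)" using assms(3) by (simp add: cong_0_iff)
  then have "[int N - 1 = 0 - 1] (mod int p)" by (rule cong_diff) (rule cong_refl)
  moreover have "int (N - 1) = int N - 1" using assms(4) by simp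
  ultimately have "Legendre (int (N - 1)) (int p) = Legendre (-1) (int p)"
    by (intro Legendre_cong) simp
  then show ?thesis using Legendre_minus_one_3_mod_4[OF assms(1,2)] by simp
qed

lemma QRset_eq_Legendre:
  assumes "prime p" "b \<in> {0, 1}"
  shows "QRset p b = {x. 0 < x \<and> x < p \<and> Legendre (int x) (int p) = (-1) ^ b}"
proof -
  have "Legendre (int x) (int p) = (if QuadRes (int p) (int x) then 1 else -1)"
    if "0 < x" "x < p" for x
  proof -
    have "\<not> [int x = 0] (mod int p)"
      using that by (metis cong_0_iff int_dvd_int_iff nat_dvd_not_less)
    then show ?thesis unfolding Legendre_def by simp
  qed
  then show ?thesis unfolding QRset_def using assms(2) by (auto split: if_splits)
qed

lemma QRset_bounds: "x \<in> QRset p b \<Longrightarrow> 0 < x \<and> x < p"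
  unfolding QRset_def by simp

lemma finite_QRset: "finite (QRset p b)"
  unfolding QRset_def by simp

lemma QRset_cases:
  assumes "0 < k" "k < p" "j \<in> {0, 1}"
  shows "k \<in> QRset p j \<or> k \<in> QRset p (1 - j)"
  using assms by (cases "j = 0") (simp_all add: QRset_def)

lemma mult_mod_mem_QRset:
  assumes "prime p" "2 < p" "b \<in> {0, 1}"
    and "coprime a p" "Legendre (int a) (int p) = -1" "x \<in> QRset p b"
  shows "(a * x) mod p \<in> QRset p (1 - b)"
proof -
  have x: "0 < x" "x < p" "Legendre (int x) (int p) = (-1) ^ b"
    using assms(6) QRset_eq_Legendre[OF assms(1,3)] by auto
  have "coprime x p"
    using x(1,2) assms(1) by (metis coprime_commute nat_dvd_not_less prime_imp_coprime_nat)
  then have "coprime (a * x) p" using assms(4) by simp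
  then have "coprime ((a * x) mod p) p" using assms(1) by simp
  then have "(a * x) mod p \<noteq> 0" using assms(1) by (metis coprime_0_left_iff not_prime_unit)
  moreover have "Legendre (int ((a * x) mod p)) (int p) = - Legendre (int x) (int p)"
    using Legendre_mod_dvd[of p p "a * x"] Legendre_mult[OF assms(1,2), of "int a" "int x"] assms(5)
    by simp
  moreover have "(a * x) mod p < p" using assms(1) prime_gt_0_nat by simp
  moreover have "(-1) ^ (1 - b) = - ((-1::int) ^ b)" "1 - b \<in> {0, 1}" using assms(3) by auto
  ultimately show ?thesis using QRset_eq_Legendre[OF assms(1), of "1 - b"] x(3) by simp
qed

lemma QRset_multiplier:
  assumes "prime p" "2 < p" "j \<in> {0, 1}"
    and "coprime a p" "Legendre (int a) (int p) = -1" "0 < k" "k < p"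
  shows "k \<in> QRset p j \<or> (a * k) mod p \<in> QRset p j"
proof -
  have "k \<in> QRset p j \<or> k \<in> QRset p (1 - j)" using QRset_cases assms(3,6,7) by blast
  moreover have "1 - (1 - j) = j" "1 - j \<in> {0, 1}" using assms(3) by auto
  ultimately show ?thesis using mult_mod_mem_QRset[OF assms(1,2) _ assms(4,5)] by metis
qed

lemma card_eq_if_swapped:
  assumes "finite S" "A \<union> B = S" "A \<inter> B = {}"
    and "inj_on \<phi> S" "\<phi> ` A \<subseteq> B" "\<phi> ` B \<subseteq> A"
  shows "card A = card B" "card S = 2 * card A"
proof -
  have "finite A" "finite B" using assms(1,2) by auto
  then have "card A \<le> card B" "card B \<le> card A"
    using assms(2,4-6) by (metis card_inj_on_le inj_on_subset sup_ge1,
        metis card_inj_on_le inj_on_subset sup_ge2)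
  then show "card A = card B" by simp
  then show "card S = 2 * card A"
    using assms(2,3) \<open>finite A\<close> \<open>finite B\<close> card_Un_disjoint by fastforce
qed

lemma mult_mod_in_totatives:
  assumes "1 < n" "coprime a n" "x \<in> totatives n"
  shows "(a * x) mod n \<in> totatives n"
proof -
  have "n \<noteq> 0" "coprime x n" using assms(1,3) by (simp_all add: in_totatives_iff)
  with assms(2) have c: "coprime ((a * x) mod n) n" by simp
  have "0 < (a * x) mod n"
  proof (rule gr0I)
    assume "(a * x) mod n = 0"
    with c show False using assms(1) by simp
  qed
  with c show ?thesis using assms(1) by (simp add: in_totatives_iff less_imp_le)
qed

lemma inj_on_mult_mod_totatives:
  assumes "1 < n" "coprime a n"
  shows "inj_on (\<lambda>x. (a * x) mod n) (totatives n)"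
proof (rule inj_onI)
  fix x y assume "x \<in> totatives n" "y \<in> totatives n" "(a * x) mod n = (a * y) mod n"
  then show "x = y"
    using assms cong_mult_lcancel_nat[OF assms(2)] totatives_less
    by (metis cong_def cong_less_modulus_unique_nat)
qed

lemma card_QRset:
  assumes "prime p" "2 < p" "b \<in> {0, 1}"
  shows "card (QRset p b) = (p - 1) div 2"
proof -
  obtain r where r: "residue_primroot p r" using prime_primitive_root_exists[of p] assms(1) prime_gt_1_nat by blast
  have cr: "coprime r p" using r by (simp add: residue_primroot_def coprime_commute)
  have Lr: "Legendre (int r) (int p) = -1" using Legendre_primroot[OF assms(1,2) r] .
  have "inj_on (\<lambda>x. (r * x) mod p) {0<..<p}"
    using inj_on_mult_mod_totatives[OF prime_gt_1_nat[OF assms(1)] cr] totatives_prime[OF assms(1)]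
    by simp
  moreover have "QRset p 0 \<union> QRset p 1 = {0<..<p}" "QRset p 0 \<inter> QRset p 1 = {}"
    unfolding QRset_def by auto
  moreover have "(\<lambda>x. (r * x) mod p) ` QRset p 0 \<subseteq> QRset p 1"
    "(\<lambda>x. (r * x) mod p) ` QRset p 1 \<subseteq> QRset p 0"
    using mult_mod_mem_QRset[OF assms(1,2) _ cr Lr] by fastforce+
  ultimately have "card (QRset p 0) = card (QRset p 1)" "p - 1 = 2 * card (QRset p 0)"
    using card_eq_if_swapped[of "{0<..<p}"] by auto
  then show ?thesis using assms(3) by auto
qed

section \<open>Generalized cyclotomic classes of order two\<close>

locale generalized_cyclotomy =
  fixes n1 n2 g1 g2 g \<nu> :: nat
  assumes prime_n1: "prime n1" and prime_n2: "prime n2"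
    and odd_n1: "odd n1" and odd_n2: "odd n2" and n1_neq_n2: "n1 \<noteq> n2"
    and primroot_g1: "residue_primroot n1 g1" and primroot_g2: "residue_primroot n2 g2"
    and g_cong_g1: "[g = g1] (mod n1)" and g_cong_g2: "[g = g2] (mod n2)"
    and nu_cong_g: "[\<nu> = g] (mod n1)" and nu_cong_1: "[\<nu> = 1] (mod n2)"
begin

lemma n1_gt_2: "2 < n1"
  using prime_ge_2_nat[OF prime_n1] odd_n1 by (cases "n1 = 2") auto

lemma n2_gt_2: "2 < n2"
  using prime_ge_2_nat[OF prime_n2] odd_n2 by (cases "n2 = 2") auto

lemma coprime_n1_n2: "coprime n1 n2"
  using prime_n1 prime_n2 n1_neq_n2 by (simp add: primes_coprime)

lemma ee_eq_lcm: "ee n1 n2 = lcm (n1 - 1) (n2 - 1)"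
proof -
  have "gcd (n1 - 1) (n2 - 1) > 0" using n1_gt_2 by simp
  then show ?thesis
    using prod_gcd_lcm_nat[of "n1 - 1" "n2 - 1"] unfolding ee_def dd_def
    by (metis nonzero_mult_div_cancel_left less_irrefl)
qed

lemma ee_times_dd: "ee n1 n2 * dd n1 n2 = (n1 - 1) * (n2 - 1)"
  unfolding ee_eq_lcm dd_def using prod_gcd_lcm_nat[of "n1 - 1" "n2 - 1"] by (simp add: mult.commute)

lemma even_ee: "even (ee n1 n2)"
  using odd_n2 n2_gt_2 dvd_trans[of 2 "n2 - 1" "ee n1 n2"] unfolding ee_eq_lcm by simp

lemma ord_g1: "ord n1 g1 = n1 - 1" and ord_g2: "ord n2 g2 = n2 - 1"
  using primroot_g1 primroot_g2 prime_n1 prime_n2 by (simp_all add: residue_primroot_def totient_prime)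

lemma coprime_g1: "coprime g1 n1" and coprime_g2: "coprime g2 n2"
  using primroot_g1 primroot_g2 by (simp_all add: residue_primroot_def coprime_commute)

lemma coprime_g: "coprime g (n1 * n2)"
  using cong_imp_coprime[OF cong_sym[OF g_cong_g1] coprime_g1]
    cong_imp_coprime[OF cong_sym[OF g_cong_g2] coprime_g2] by simp

lemma coprime_nu: "coprime \<nu> (n1 * n2)"
  using cong_imp_coprime[OF cong_sym[OF nu_cong_g]] cong_imp_coprime[OF cong_sym[OF nu_cong_1]]
    coprime_g by simp

lemma g_nu_cong_n1: "[g ^ s * \<nu> ^ t = g1 ^ (s + t)] (mod n1)"
  using cong_mult[OF cong_pow[OF g_cong_g1] cong_pow[OF cong_trans[OF nu_cong_g g_cong_g1]]]
  by (simp add: power_add)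

lemma g_nu_cong_n2: "[g ^ s * \<nu> ^ t = g2 ^ s] (mod n2)"
  using cong_mult[OF cong_pow[OF g_cong_g2] cong_pow[OF nu_cong_1]] by simp

text \<open>The exponent of \<open>g\<close> is determined modulo \<open>n2 - 1\<close> by the residue modulo \<open>n2\<close>, the sum
  of both exponents modulo \<open>n1 - 1\<close> by the residue modulo \<open>n1\<close>; together they determine
  \<open>t\<close> modulo \<open>d\<close> and then \<open>s\<close> modulo \<open>lcm (n1 - 1) (n2 - 1) = e\<close>.\<close>

lemma g_nu_inj:
  assumes "s < ee n1 n2" "s' < ee n1 n2" "t < dd n1 n2" "t' < dd n1 n2"
    and "(g ^ s * \<nu> ^ t) mod (n1 * n2) = (g ^ s' * \<nu> ^ t') mod (n1 * n2)"
  shows "s = s' \<and> t = t'"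
proof -
  have "[g ^ s * \<nu> ^ t = g ^ s' * \<nu> ^ t'] (mod n1 * n2)" using assms(5) by (simp add: cong_def)
  then have c1: "[g ^ s * \<nu> ^ t = g ^ s' * \<nu> ^ t'] (mod n1)"
    and c2: "[g ^ s * \<nu> ^ t = g ^ s' * \<nu> ^ t'] (mod n2)"
    by (auto intro: cong_dvd_modulus_nat)
  have "[g2 ^ s = g2 ^ s'] (mod n2)"
    using c2 g_nu_cong_n2[of s t] g_nu_cong_n2[of s' t'] by (meson cong_sym cong_trans)
  then have s2: "[s = s'] (mod n2 - 1)"
    using order_divides_expdiff[of n2 g2 s s'] coprime_g2 ord_g2 by (simp add: coprime_commute)
  have "[g1 ^ (s + t) = g1 ^ (s' + t')] (mod n1)"
    using c1 g_nu_cong_n1[of s t] g_nu_cong_n1[of s' t'] by (meson cong_sym cong_trans)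
  then have s1: "[s + t = s' + t'] (mod n1 - 1)"
    using order_divides_expdiff[of n1 g1 "s + t" "s' + t'"] coprime_g1 ord_g1
    by (simp add: coprime_commute)
  have "[s = s'] (mod dd n1 n2)" "[s + t = s' + t'] (mod dd n1 n2)"
    using cong_dvd_modulus_nat[OF s2] cong_dvd_modulus_nat[OF s1] by (simp_all add: dd_def)
  then have "[s' + t = s' + t'] (mod dd n1 n2)"
    by (meson cong_add cong_refl cong_sym cong_trans)
  then have "t = t'" using assms(3,4) cong_less_modulus_unique_nat cong_add_lcancel_nat by blast
  then have "[s = s'] (mod ee n1 n2)"
    using s1 s2 unfolding ee_eq_lcm by (simp add: cong_add_rcancel_nat cong_cong_lcm_nat)
  then have "s = s'" using assms(1,2) cong_less_modulus_unique_nat by blast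
  with \<open>t = t'\<close> show ?thesis by simp
qed

lemma n1_n2_gt_1: "1 < n1 * n2"
  using n1_gt_2 n2_gt_2 by (simp add: one_less_mult)

lemma g_nu_in_totatives: "(g ^ s * \<nu> ^ t) mod (n1 * n2) \<in> totatives (n1 * n2)"
proof -
  have "coprime (g ^ s * \<nu> ^ t) (n1 * n2)" using coprime_g coprime_nu by simp
  moreover have "1 \<in> totatives (n1 * n2)"
    using n1_n2_gt_1 one_in_totatives[of "n1 * n2"] by (metis One_nat_def less_trans zero_less_one)
  ultimately show ?thesis using mult_mod_in_totatives[OF n1_n2_gt_1] by fastforce
qed

lemma totatives_eq_g_nu_image:
  "totatives (n1 * n2) = (\<lambda>(s, t). (g ^ s * \<nu> ^ t) mod (n1 * n2)) ` ({..<ee n1 n2} \<times> {..<dd n1 n2})"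
proof -
  let ?f = "\<lambda>(s, t). (g ^ s * \<nu> ^ t) mod (n1 * n2)"
  have "inj_on ?f ({..<ee n1 n2} \<times> {..<dd n1 n2})"
    by (auto intro!: inj_onI dest: g_nu_inj)
  then have "card (?f ` ({..<ee n1 n2} \<times> {..<dd n1 n2})) = totient (n1 * n2)"
    using ee_times_dd totient_mult_coprime[OF coprime_n1_n2] prime_n1 prime_n2
    by (simp add: card_image card_cartesian_product totient_prime)
  moreover have "?f ` ({..<ee n1 n2} \<times> {..<dd n1 n2}) \<subseteq> totatives (n1 * n2)"
    using g_nu_in_totatives by auto
  ultimately show ?thesis by (metis card_subset_eq finite_totatives totient_def)
qed

lemma Legendre_g_nu: "Legendre (int ((g ^ s * \<nu> ^ t) mod (n1 * n2))) (int n2) = (-1) ^ s"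
proof -
  have "Legendre (int ((g ^ s * \<nu> ^ t) mod (n1 * n2))) (int n2) = Legendre (int (g2 ^ s)) (int n2)"
    using Legendre_mod_dvd[of n2 "n1 * n2"] Legendre_cong g_nu_cong_n2[of s t]
    by (metis cong_int_iff dvd_triv_right)
  then show ?thesis
    using Legendre_power[OF prime_n2 n2_gt_2, of "int g2" s]
      Legendre_primroot[OF prime_n2 n2_gt_2 primroot_g2] by simp
qed

lemma Dset_eq_Legendre:
  assumes "b \<in> {0, 1}"
  shows "Dset n1 n2 g \<nu> b = {x \<in> totatives (n1 * n2). Legendre (int x) (int n2) = (-1) ^ b}"
proof (intro equalityI subsetI)
  fix x assume "x \<in> Dset n1 n2 g \<nu> b"
  then obtain s i where "x = (g ^ (2 * s + b) * \<nu> ^ i) mod (n1 * n2)" unfolding Dset_def by blast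
  then show "x \<in> {x \<in> totatives (n1 * n2). Legendre (int x) (int n2) = (-1) ^ b}"
    using g_nu_in_totatives[of "2 * s + b" i] Legendre_g_nu[of "2 * s + b" i]
    by (simp add: power_add)
next
  fix x assume x: "x \<in> {x \<in> totatives (n1 * n2). Legendre (int x) (int n2) = (-1) ^ b}"
  then obtain s t where st: "s < ee n1 n2" "t < dd n1 n2" "x = (g ^ s * \<nu> ^ t) mod (n1 * n2)"
    by (force simp: totatives_eq_g_nu_image)
  have "(-1::int) ^ s = (-1) ^ b" using x st(3) Legendre_g_nu by simp
  then have "s mod 2 = b" using assms by (cases "even s") (auto simp: odd_iff_mod_2_eq_one)
  then have "s = 2 * (s div 2) + b" by presburger
  moreover have "s div 2 \<le> (ee n1 n2 - 2) div 2"
  proof -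
    obtain k where "ee n1 n2 = 2 * k" using even_ee by blast
    then show ?thesis using st(1) by presburger
  qed
  ultimately show "x \<in> Dset n1 n2 g \<nu> b"
    unfolding Dset_def using st(2,3) by (intro CollectI exI[of _ "s div 2"] exI[of _ t]) auto
qed

lemma Legendre_n2_g: "Legendre (int g) (int n2) = -1"
proof -
  have "[int g = int g2] (mod int n2)" using g_cong_g2 by (simp add: cong_int_iff)
  then show ?thesis using Legendre_cong Legendre_primroot[OF prime_n2 n2_gt_2 primroot_g2] by metis
qed

lemma Legendre_n1_g: "Legendre (int g) (int n1) = -1"
proof -
  have "[int g = int g1] (mod int n1)" using g_cong_g1 by (simp add: cong_int_iff)
  then show ?thesis using Legendre_cong Legendre_primroot[OF prime_n1 n1_gt_2 primroot_g1] by metis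
qed

lemma mult_mod_mem_Dset:
  assumes "b \<in> {0, 1}" "coprime a (n1 * n2)" "Legendre (int a) (int n2) = -1"
    and "x \<in> Dset n1 n2 g \<nu> b"
  shows "(a * x) mod (n1 * n2) \<in> Dset n1 n2 g \<nu> (1 - b)"
proof -
  have x: "x \<in> totatives (n1 * n2)" "Legendre (int x) (int n2) = (-1) ^ b"
    using assms(4) Dset_eq_Legendre[OF assms(1)] by auto
  have "(a * x) mod (n1 * n2) \<in> totatives (n1 * n2)"
    using mult_mod_in_totatives[OF n1_n2_gt_1 assms(2) x(1)] .
  moreover have "Legendre (int ((a * x) mod (n1 * n2))) (int n2) = - Legendre (int x) (int n2)"
    using Legendre_mod_dvd[of n2 "n1 * n2" "a * x"] Legendre_mult[OF prime_n2 n2_gt_2, of "int a" "int x"]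
      assms(3) by simp
  moreover have "(-1) ^ (1 - b) = - ((-1::int) ^ b)" "1 - b \<in> {0, 1}" using assms(1) by auto
  ultimately show ?thesis using Dset_eq_Legendre[of "1 - b"] x(2) by simp
qed

lemma Dset_Un: "Dset n1 n2 g \<nu> 0 \<union> Dset n1 n2 g \<nu> 1 = totatives (n1 * n2)"
proof -
  have "Legendre (int x) (int n2) \<in> {1, -1}" if "x \<in> totatives (n1 * n2)" for x
    using that Legendre_coprime[OF prime_n2, of x] by (simp add: in_totatives_iff)
  then show ?thesis using Dset_eq_Legendre[of 0] Dset_eq_Legendre[of 1] by auto
qed

lemma Dset_Int: "Dset n1 n2 g \<nu> 0 \<inter> Dset n1 n2 g \<nu> 1 = {}"
  using Dset_eq_Legendre[of 0] Dset_eq_Legendre[of 1] by auto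

lemma card_Dset:
  assumes "b \<in> {0, 1}"
  shows "2 * card (Dset n1 n2 g \<nu> b) = (n1 - 1) * (n2 - 1)"
proof -
  have "inj_on (\<lambda>x. (g * x) mod (n1 * n2)) (totatives (n1 * n2))"
    using inj_on_mult_mod_totatives[OF n1_n2_gt_1 coprime_g] .
  moreover have "(\<lambda>x. (g * x) mod (n1 * n2)) ` Dset n1 n2 g \<nu> 0 \<subseteq> Dset n1 n2 g \<nu> 1"
    "(\<lambda>x. (g * x) mod (n1 * n2)) ` Dset n1 n2 g \<nu> 1 \<subseteq> Dset n1 n2 g \<nu> 0"
    using mult_mod_mem_Dset[OF _ coprime_g Legendre_n2_g] by fastforce+
  ultimately have "card (Dset n1 n2 g \<nu> 0) = card (Dset n1 n2 g \<nu> 1)"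
    "totient (n1 * n2) = 2 * card (Dset n1 n2 g \<nu> 0)"
    using card_eq_if_swapped[OF finite_totatives Dset_Un Dset_Int] by (auto simp: totient_def)
  then show ?thesis using assms totient_mult_coprime[OF coprime_n1_n2] prime_n1 prime_n2
    by (auto simp: totient_prime)
qed

end

section \<open>The defining set\<close>

text \<open>The exponents \<open>k\<close> with \<open>\<theta>^k\<close> a root of \<open>d_i(x) d_j^(n1)(x) d_h^(n2)(x)\<close>.\<close>

definition defining_set :: "nat \<Rightarrow> nat \<Rightarrow> nat \<Rightarrow> nat \<Rightarrow> nat \<Rightarrow> nat \<Rightarrow> nat \<Rightarrow> nat set" where
  "defining_set n1 n2 g \<nu> i j h =
     Dset n1 n2 g \<nu> i \<union> (\<lambda>k. n2 * k) ` QRset n1 j \<union> (\<lambda>k. n1 * k) ` QRset n2 h"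

lemma rootprod_eq_prod_image:
  assumes "0 < m"
  shows "rootprod \<theta> S m = (\<Prod>k\<in>(\<lambda>j. m * j) ` S. [:- (\<theta> ^ k), 1:])"
proof -
  have "inj_on (\<lambda>j. m * j) S" using assms by (simp add: inj_on_mult)
  then show ?thesis unfolding rootprod_def by (simp add: prod.reindex)
qed

context generalized_cyclotomy
begin

lemma Dset_in_totatives:
  assumes "i \<in> {0, 1}"
  shows "Dset n1 n2 g \<nu> i \<subseteq> totatives (n1 * n2)"
  unfolding Dset_eq_Legendre[OF assms] by blast

lemma finite_Dset: "i \<in> {0, 1} \<Longrightarrow> finite (Dset n1 n2 g \<nu> i)"
  by (rule finite_subset[OF Dset_in_totatives]) simp_all

lemma defining_set_disjoint:
  assumes "i \<in> {0, 1}"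
  shows "Dset n1 n2 g \<nu> i \<inter> ((\<lambda>k. n2 * k) ` QRset n1 j \<union> (\<lambda>k. n1 * k) ` QRset n2 h) = {}"
    and "(\<lambda>k. n2 * k) ` QRset n1 j \<inter> (\<lambda>k. n1 * k) ` QRset n2 h = {}"
proof -
  have "\<not> coprime (p * k) (n1 * n2)" if "p \<in> {n1, n2}" for p k
  proof
    assume "coprime (p * k) (n1 * n2)"
    then have "is_unit p" by (rule coprime_common_divisor) (use that in auto)
    then show False using that prime_n1 prime_n2 not_prime_unit by blast
  qed
  then have "x \<notin> totatives (n1 * n2)"
    if "x \<in> (\<lambda>k. n2 * k) ` QRset n1 j \<union> (\<lambda>k. n1 * k) ` QRset n2 h" for x
    using that unfolding in_totatives_iff by blast
  then show "Dset n1 n2 g \<nu> i \<inter> ((\<lambda>k. n2 * k) ` QRset n1 j \<union> (\<lambda>k. n1 * k) ` QRset n2 h) = {}"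
    using Dset_in_totatives[OF assms] by blast
  have False if "k \<in> QRset n1 j" "n2 * k = n1 * k'" for k k'
  proof -
    have "n1 dvd n2 * k" using that(2) by (metis dvd_triv_left)
    then have "n1 dvd k" using coprime_n1_n2 by (simp add: coprime_dvd_mult_right_iff)
    then show False using QRset_bounds[OF that(1)] by (simp add: nat_dvd_not_less)
  qed
  then show "(\<lambda>k. n2 * k) ` QRset n1 j \<inter> (\<lambda>k. n1 * k) ` QRset n2 h = {}" by blast
qed

lemma defining_set_bounds:
  assumes "i \<in> {0, 1}" "x \<in> defining_set n1 n2 g \<nu> i j h"
  shows "0 < x \<and> x < n1 * n2"
proof -
  consider "x \<in> Dset n1 n2 g \<nu> i" | k where "k \<in> QRset n1 j" "x = n2 * k"
    | k where "k \<in> QRset n2 h" "x = n1 * k"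
    using assms(2) unfolding defining_set_def by auto
  then show ?thesis
  proof cases
    case 1
    then have "x \<in> totatives (n1 * n2)" using Dset_in_totatives[OF assms(1)] by blast
    then show ?thesis using totatives_less[OF _ n1_n2_gt_1] by (simp add: in_totatives_iff)
  next
    case (2 k)
    then show ?thesis using QRset_bounds[of k n1 j] n2_gt_2 by simp
  next
    case (3 k)
    then show ?thesis using QRset_bounds[of k n2 h] n1_gt_2 by simp
  qed
qed

lemma card_defining_set:
  assumes "i \<in> {0, 1}" "j \<in> {0, 1}" "h \<in> {0, 1}"
  shows "2 * card (defining_set n1 n2 g \<nu> i j h) + 1 = n1 * n2"
proof -
  let ?D = "Dset n1 n2 g \<nu> i" and ?A = "(\<lambda>k. n2 * k) ` QRset n1 j"
    and ?B = "(\<lambda>k. n1 * k) ` QRset n2 h"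
  have "card ?A = card (QRset n1 j)" "card ?B = card (QRset n2 h)"
    using n1_gt_2 n2_gt_2 by (simp_all add: card_image inj_on_mult)
  moreover have "card (?D \<union> (?A \<union> ?B)) = card ?D + (card ?A + card ?B)"
    using defining_set_disjoint[OF assms(1)] finite_Dset[OF assms(1)] finite_QRset
    by (simp add: card_Un_disjoint)
  moreover obtain a b where "n1 = 2 * a + 1" "n2 = 2 * b + 1" using odd_n1 odd_n2 oddE by metis
  ultimately show ?thesis
    using card_Dset[OF assms(1)] card_QRset[OF prime_n1 n1_gt_2 assms(2)]
      card_QRset[OF prime_n2 n2_gt_2 assms(3)]
    unfolding defining_set_def Un_assoc by (simp add: algebra_simps)
qed

lemma defining_set_multiplier:
  assumes "i \<in> {0, 1}" "j \<in> {0, 1}" "h \<in> {0, 1}"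
    and "coprime a (n1 * n2)" "Legendre (int a) (int n1) = -1" "Legendre (int a) (int n2) = -1"
    and "0 < x" "x < n1 * n2"
  shows "x \<in> defining_set n1 n2 g \<nu> i j h \<or> (a * x) mod (n1 * n2) \<in> defining_set n1 n2 g \<nu> i j h"
proof -
  have a: "coprime a n1" "coprime a n2" using assms(4) by simp_all
  consider "coprime x (n1 * n2)" | k where "x = n2 * k" | k where "x = n1 * k"
    using prime_n1 prime_n2 by (metis coprime_commute coprime_mult_right_iff dvdE prime_imp_coprime_nat)
  then show ?thesis
  proof cases
    case 1
    then have "x \<in> totatives (n1 * n2)" using assms(7,8) by (simp add: in_totatives_iff)
    then have "x \<in> Dset n1 n2 g \<nu> i \<or> x \<in> Dset n1 n2 g \<nu> (1 - i)"
      using Dset_Un assms(1) by auto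
    moreover have "(a * x) mod (n1 * n2) \<in> Dset n1 n2 g \<nu> i" if "x \<in> Dset n1 n2 g \<nu> (1 - i)"
      using mult_mod_mem_Dset[OF _ assms(4,6) that] assms(1) by auto
    ultimately show ?thesis unfolding defining_set_def by blast
  next
    case (2 k)
    then have "(a * x) mod (n1 * n2) = n2 * ((a * k) mod n1)"
      by (metis mult.commute mult.left_commute mod_mult_mult1)
    moreover have "0 < k" "k < n1" using 2 assms(7,8) by simp_all
    ultimately show ?thesis using QRset_multiplier[OF prime_n1 n1_gt_2 assms(2) a(1) assms(5)] 2
      unfolding defining_set_def by blast
  next
    case (3 k)
    then have "(a * x) mod (n1 * n2) = n1 * ((a * k) mod n2)"
      by (metis mult.left_commute mod_mult_mult1)
    moreover have "0 < k" "k < n2" using 3 assms(7,8) by simp_all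
    ultimately show ?thesis using QRset_multiplier[OF prime_n2 n2_gt_2 assms(3) a(2) assms(6)] 3
      unfolding defining_set_def by blast
  qed
qed

lemma defining_set_multiplier_minus_one:
  assumes "i \<in> {0, 1}" "j \<in> {0, 1}" "h \<in> {0, 1}" "n1 mod 4 = 3" "n2 mod 4 = 3"
    and "0 < x" "x < n1 * n2"
  shows "x \<in> defining_set n1 n2 g \<nu> i j h
    \<or> ((n1 * n2 - 1) * x) mod (n1 * n2) \<in> defining_set n1 n2 g \<nu> i j h"
proof (rule defining_set_multiplier[OF assms(1-3) _ _ _ assms(6,7)])
  have "0 < n1 * n2" using n1_n2_gt_1 by linarith
  then show "coprime (n1 * n2 - 1) (n1 * n2)" by (rule coprime_diff_one_left_nat)
  show "Legendre (int (n1 * n2 - 1)) (int n1) = -1" "Legendre (int (n1 * n2 - 1)) (int n2) = -1"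
    using Legendre_pred_multiple_3_mod_4[OF prime_n1 assms(4) dvd_triv_left \<open>0 < n1 * n2\<close>]
      Legendre_pred_multiple_3_mod_4[OF prime_n2 assms(5) dvd_triv_right \<open>0 < n1 * n2\<close>] by simp_all
qed

lemma rootprod_defining_set:
  assumes "i \<in> {0, 1}"
  shows "rootprod \<theta> (Dset n1 n2 g \<nu> i) 1 * rootprod \<theta> (QRset n1 j) n2 * rootprod \<theta> (QRset n2 h) n1
       = (\<Prod>k\<in>defining_set n1 n2 g \<nu> i j h. [:- (\<theta> ^ k), 1:])"
proof -
  let ?D = "Dset n1 n2 g \<nu> i" and ?A = "(\<lambda>k. n2 * k) ` QRset n1 j"
    and ?B = "(\<lambda>k. n1 * k) ` QRset n2 h" and ?L = "\<lambda>k. [:- (\<theta> ^ k), 1:]"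
  have "prod ?L (?D \<union> (?A \<union> ?B)) = prod ?L ?D * (prod ?L ?A * prod ?L ?B)"
    using defining_set_disjoint[OF assms] finite_Dset[OF assms] finite_QRset
    by (simp add: prod.union_disjoint)
  moreover have "rootprod \<theta> ?D 1 = prod ?L ?D" unfolding rootprod_def by simp
  moreover have "rootprod \<theta> (QRset n1 j) n2 = prod ?L ?A" "rootprod \<theta> (QRset n2 h) n1 = prod ?L ?B"
    using n1_gt_2 n2_gt_2 by (simp_all add: rootprod_eq_prod_image)
  ultimately show ?thesis unfolding defining_set_def Un_assoc by (simp only: mult.assoc)
qed

end

section \<open>Polynomials and reduction modulo \<open>x^n - 1\<close>\<close>

locale field_embedding =
  fixes f :: "'a::field \<Rightarrow> 'b::field"
  assumes inj_f: "inj f" and hom_0: "f 0 = 0" and hom_1: "f 1 = 1"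
    and hom_add: "\<And>x y. f (x + y) = f x + f y" and hom_mult: "\<And>x y. f (x * y) = f x * f y"
begin

lemma hom_eq_0_iff: "f x = 0 \<longleftrightarrow> x = 0"
  using inj_f hom_0 by (metis injD)

lemma hom_uminus: "f (- x) = - f x"
  using hom_add[of "- x" x] hom_0 by (simp add: eq_neg_iff_add_eq_0)

lemma hom_sum: "f (sum g A) = (\<Sum>x\<in>A. f (g x))"
  by (induction A rule: infinite_finite_induct) (auto simp: hom_0 hom_add)

lemma hom_power: "f (x ^ k) = f x ^ k"
  by (induction k) (auto simp: hom_1 hom_mult)

lemma map_poly_add: "map_poly f (p + q) = map_poly f p + map_poly f q"
  by (rule poly_eqI) (simp add: coeff_map_poly hom_0 hom_add)

lemma map_poly_mult: "map_poly f (p * q) = map_poly f p * map_poly f q"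
  by (rule poly_eqI) (simp add: coeff_map_poly coeff_mult hom_0 hom_sum hom_mult)

lemma map_poly_sum: "map_poly f (sum g A) = (\<Sum>x\<in>A. map_poly f (g x))"
  by (induction A rule: infinite_finite_induct) (auto simp: map_poly_add)

lemma map_poly_xpow_minus_one: "map_poly f (monom 1 n - 1) = monom 1 n - 1"
  by (rule poly_eqI) (simp add: coeff_map_poly hom_0 hom_1 hom_add hom_uminus coeff_monom)

lemma map_poly_eq_0_iff_hom: "map_poly f p = 0 \<longleftrightarrow> p = 0"
  using map_poly_eq_0_iff[of f p] hom_0 hom_eq_0_iff by blast

lemma degree_map_poly_eq: "degree (map_poly f p) = degree p"
  by (rule degree_map_poly) (simp add: hom_eq_0_iff)

lemma poly_map_poly_hom: "poly (map_poly f p) (f x) = f (poly p x)"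
  by (simp add: poly_altdef degree_map_poly_eq coeff_map_poly hom_0 hom_sum hom_mult hom_power)

lemma map_poly_mod: "map_poly f (p mod q) = map_poly f p mod map_poly f q"
proof (cases "q = 0 \<or> p mod q = 0")
  case True
  then show ?thesis
  proof
    assume "p mod q = 0"
    then obtain r where "p = q * r" by (auto simp: mod_eq_0_iff_dvd)
    with \<open>p mod q = 0\<close> show ?thesis by (simp add: map_poly_mult)
  qed simp
next
  case False
  have "map_poly f p = map_poly f (p mod q) + map_poly f (p div q) * map_poly f q"
    by (metis map_poly_add map_poly_mult div_mult_mod_eq add.commute)
  then have "map_poly f p mod map_poly f q = map_poly f (p mod q) mod map_poly f q"
    by (simp add: mod_mult_self1)
  also have "\<dots> = map_poly f (p mod q)"
    using False degree_mod_less[of q p] by (intro mod_poly_less) (simp add: degree_map_poly_eq)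
  finally show ?thesis by simp
qed

lemma map_poly_dvd_iff: "map_poly f q dvd map_poly f p \<longleftrightarrow> q dvd p"
proof
  assume "map_poly f q dvd map_poly f p"
  then have "map_poly f (p mod q) = 0" by (simp add: map_poly_mod)
  then show "q dvd p" by (simp add: map_poly_eq_0_iff_hom mod_eq_0_iff_dvd)
next
  assume "q dvd p"
  then show "map_poly f q dvd map_poly f p" by (auto simp: map_poly_mult)
qed

end

lemma prod_linear_dvd_of_roots:
  fixes p :: "'b::field poly"
  assumes "finite S" "inj_on \<zeta> S" "\<And>k. k \<in> S \<Longrightarrow> poly p (\<zeta> k) = 0"
  shows "(\<Prod>k\<in>S. [:- \<zeta> k, 1:]) dvd p"
  using assms
proof (induction S arbitrary: p rule: finite_induct)
  case empty
  then show ?case by simp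
next
  case (insert a S)
  obtain r where r: "p = [:- \<zeta> a, 1:] * r"
    using insert.prems(2) poly_eq_0_iff_dvd by blast
  have "poly r (\<zeta> k) = 0" if "k \<in> S" for k
    using insert.prems that insert.hyps(2) unfolding r by (auto simp: inj_on_def)
  then have "(\<Prod>k\<in>S. [:- \<zeta> k, 1:]) dvd r"
    using insert.IH insert.prems(1) by (simp add: inj_on_insert)
  then have "[:- \<zeta> a, 1:] * (\<Prod>k\<in>S. [:- \<zeta> k, 1:]) dvd p"
    unfolding r by (rule mult_dvd_mono[OF dvd_refl])
  then show ?case using insert.hyps by simp
qed

lemma degree_prod_linear: "finite S \<Longrightarrow> degree (\<Prod>k\<in>S. [:- \<zeta> k, 1::'b::field:]) = card S"
  using degree_prod_sum_eq[of S "\<lambda>k. [:- \<zeta> k, 1:]"] by simp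

lemma prod_linear_nonzero: "(\<Prod>k\<in>S. [:- \<zeta> k, 1::'b::field:]) \<noteq> 0"
  by (cases "finite S") (simp_all add: prod_zero_iff)

lemma poly_eq_sum_lessThan:
  fixes p :: "'a::comm_semiring_1 poly"
  assumes "degree p < n"
  shows "poly p x = (\<Sum>i<n. coeff p i * x ^ i)"
  unfolding poly_altdef using assms
  by (intro sum.mono_neutral_left) (auto simp: coeff_eq_0)

lemma degree_xpow_minus_one: "0 < n \<Longrightarrow> degree (monom (1::'a::field) n - 1) = n"
  using degree_add_eq_left[of "-1" "monom (1::'a) n"] by (simp add: degree_monom_eq)

lemma xpow_minus_one_dvd: "(monom (1::'a::field) n - 1) dvd (monom 1 m - monom 1 (m mod n))"
proof -
  have "monom (1::'a) m = monom 1 (m mod n) * monom 1 n ^ (m div n)"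
    by (metis mult_monom monom_power mult_1 power_one mod_mult_div_eq)
  then have "monom (1::'a) m - monom 1 (m mod n) = monom 1 (m mod n) * (monom 1 n ^ (m div n) - 1)"
    by (simp add: algebra_simps)
  then show ?thesis by (simp add: power_diff_1_eq)
qed

lemma mod_xpow_minus_one:
  fixes p :: "'a::field poly"
  assumes "0 < n"
  shows "p mod (monom 1 n - 1) = (\<Sum>m\<le>degree p. monom (coeff p m) (m mod n))"
proof -
  let ?X = "monom (1::'a) n - 1"
  let ?T = "\<Sum>m\<le>degree p. monom (coeff p m) (m mod n)"
  have "p - ?T = (\<Sum>m\<le>degree p. monom (coeff p m) m - monom (coeff p m) (m mod n))"
    by (simp add: sum_subtractf poly_as_sum_of_monoms)
  also have "\<dots> = (\<Sum>m\<le>degree p. smult (coeff p m) (monom 1 m - monom 1 (m mod n)))"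
    by (simp add: smult_monom smult_diff_right)
  finally have "?X dvd p - ?T" by (simp only: dvd_sum dvd_smult xpow_minus_one_dvd)
  then obtain k where k: "p - ?T = ?X * k" by blast
  have "degree ?T \<le> n - 1"
  proof (rule degree_le, intro allI impI)
    fix i assume "n - 1 < i"
    then have "m mod n \<noteq> i" for m using mod_less_divisor[OF assms, of m] by linarith
    then show "coeff ?T i = 0" by (simp add: coeff_sum coeff_monom)
  qed
  then have "degree ?T < degree ?X" using assms by (simp add: degree_xpow_minus_one)
  from k have "p = ?X * k + ?T" by (simp only: diff_eq_eq)
  then have "p mod ?X = (?X * k + ?T) mod ?X" by (rule arg_cong)
  also have "\<dots> = ?T mod ?X" by (rule mod_mult_self4)
  also have "\<dots> = ?T" using \<open>degree ?T < degree ?X\<close> by (rule mod_poly_less)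
  finally show ?thesis .
qed

lemma coeff_mod_xpow_minus_one_nonzero:
  fixes p :: "'a::field poly"
  assumes "0 < n" "coeff (p mod (monom 1 n - 1)) k \<noteq> 0"
  obtains m where "coeff p m \<noteq> 0" "m mod n = k"
proof -
  have "(\<Sum>m\<le>degree p. coeff (monom (coeff p m) (m mod n)) k) \<noteq> 0"
    using assms by (simp add: mod_xpow_minus_one coeff_sum)
  then obtain m where "coeff (monom (coeff p m) (m mod n)) k \<noteq> 0" by (meson sum.neutral)
  then show ?thesis using that by (auto simp: coeff_monom split: if_splits)
qed

lemma coeff_mult_nonzero:
  fixes p q :: "'a::field poly"
  assumes "coeff (p * q) m \<noteq> 0"
  obtains i j where "m = i + j" "coeff p i \<noteq> 0" "coeff q j \<noteq> 0"
proof -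
  from assms obtain i where "i \<le> m" "coeff p i * coeff q (m - i) \<noteq> 0"
    unfolding coeff_mult by (meson sum.neutral atMost_iff)
  then show ?thesis using that[of i "m - i"] by auto
qed

text \<open>For \<open>degree c < n\<close>, \<open>dilate n a c\<close> is \<open>c(x^a) mod (x^n - 1)\<close>.\<close>

definition dilate :: "nat \<Rightarrow> nat \<Rightarrow> 'a::comm_monoid_add poly \<Rightarrow> 'a poly" where
  "dilate n a c = (\<Sum>k<n. monom (coeff c k) ((a * k) mod n))"

definition coeff_support :: "nat \<Rightarrow> 'a::zero poly \<Rightarrow> nat set" where
  "coeff_support n c = {i. i < n \<and> coeff c i \<noteq> 0}"

lemma hweight_eq_card_support: "hweight n c = card (coeff_support n c)"
  unfolding hweight_def coeff_support_def ..

lemma finite_coeff_support [simp]: "finite (coeff_support n c)"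
  unfolding coeff_support_def by simp

lemma coeff_dilate_nonzero:
  fixes c :: "'a::comm_monoid_add poly"
  assumes "coeff (dilate n a c) m \<noteq> 0"
  obtains k where "k < n" "coeff c k \<noteq> 0" "(a * k) mod n = m"
proof -
  have "(\<Sum>k<n. coeff (monom (coeff c k) ((a * k) mod n)) m) \<noteq> 0"
    using assms by (simp add: dilate_def coeff_sum)
  then obtain k where "k < n" "coeff (monom (coeff c k) ((a * k) mod n)) m \<noteq> 0"
    by (meson sum.neutral lessThan_iff)
  then show ?thesis using that by (auto simp: coeff_monom split: if_splits)
qed

lemma coeff_support_mult_dilate:
  fixes c :: "'a::field poly"
  assumes "0 < n" "degree c < n"
  shows "coeff_support n (c * dilate n a c mod (monom 1 n - 1))
           \<subseteq> (\<lambda>(i, k). (i + (a * k) mod n) mod n) ` (coeff_support n c \<times> coeff_support n c)"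
proof
  fix x assume "x \<in> coeff_support n (c * dilate n a c mod (monom 1 n - 1))"
  then have "coeff (c * dilate n a c mod (monom 1 n - 1)) x \<noteq> 0" by (simp add: coeff_support_def)
  then obtain m where m: "coeff (c * dilate n a c) m \<noteq> 0" "m mod n = x"
    using coeff_mod_xpow_minus_one_nonzero[OF assms(1)] by metis
  obtain i j where ij: "m = i + j" "coeff c i \<noteq> 0" "coeff (dilate n a c) j \<noteq> 0"
    using coeff_mult_nonzero[OF m(1)] by metis
  obtain k where k: "k < n" "coeff c k \<noteq> 0" "(a * k) mod n = j"
    using coeff_dilate_nonzero[OF ij(3)] by metis
  have "i < n" using ij(2) assms(2) le_degree by (metis le_less_trans)
  then have "(i, k) \<in> coeff_support n c \<times> coeff_support n c"
    using ij(2) k by (simp add: coeff_support_def)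
  moreover have "x = (i + (a * k) mod n) mod n" using m(2) ij(1) k(3) by simp
  ultimately show "x \<in> (\<lambda>(i, k). (i + (a * k) mod n) mod n) ` (coeff_support n c \<times> coeff_support n c)"
    by force
qed

lemma hweight_mult_dilate_le:
  fixes c :: "'a::field poly"
  assumes "0 < n" "degree c < n"
  shows "hweight n (c * dilate n a c mod (monom 1 n - 1)) \<le> hweight n c ^ 2"
proof -
  let ?S = "coeff_support n c"
  have "hweight n (c * dilate n a c mod (monom 1 n - 1))
      \<le> card ((\<lambda>(i, k). (i + (a * k) mod n) mod n) ` (?S \<times> ?S))"
    unfolding hweight_eq_card_support by (rule card_mono[OF _ coeff_support_mult_dilate[OF assms]]) simp
  also have "\<dots> \<le> card (?S \<times> ?S)" by (rule card_image_le) simp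
  finally show ?thesis by (simp add: card_cartesian_product hweight_eq_card_support power2_eq_square)
qed

text \<open>For \<open>a = n - 1\<close>, i.e. \<open>c(x^-1)\<close>, the \<open>w\<close> diagonal pairs all land on the constant
  coefficient.\<close>

lemma hweight_mult_reverse_le:
  fixes c :: "'a::field poly"
  assumes "0 < n" "degree c < n"
  shows "hweight n (c * dilate n (n - 1) c mod (monom 1 n - 1)) + hweight n c \<le> hweight n c ^ 2 + 1"
proof -
  let ?S = "coeff_support n c" and ?h = "\<lambda>(i, k). (i + ((n - 1) * k) mod n) mod n"
  let ?O = "?S \<times> ?S - (\<lambda>i. (i, i)) ` ?S"
  have diag: "?h (k, k) = 0" for k
  proof -
    have "k + (n - 1) * k = n * k" using assms(1) by (cases n) simp_all
    then show ?thesis by (simp add: mod_add_right_eq)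
  qed
  have "?h ` (?S \<times> ?S) \<subseteq> insert 0 (?h ` ?O)" using diag by auto
  then have "card (?h ` (?S \<times> ?S)) \<le> card (insert 0 (?h ` ?O))" by (intro card_mono) simp_all
  also have "\<dots> \<le> Suc (card (?h ` ?O))" by (rule card_insert_le_m1) simp_all
  also have "\<dots> \<le> Suc (card ?O)" using card_image_le[of ?O ?h] by simp
  also have "card ?O = card ?S * card ?S - card ?S"
    by (simp add: card_Diff_subset card_image inj_on_def card_cartesian_product subset_eq)
  finally have "card (?h ` (?S \<times> ?S)) \<le> Suc (card ?S * card ?S - card ?S)" .
  moreover have "hweight n (c * dilate n (n - 1) c mod (monom 1 n - 1)) \<le> card (?h ` (?S \<times> ?S))"
    unfolding hweight_eq_card_support by (rule card_mono[OF _ coeff_support_mult_dilate[OF assms]]) simp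
  moreover have "card ?S \<le> card ?S * card ?S" by (cases "card ?S") simp_all
  ultimately show ?thesis unfolding hweight_eq_card_support power2_eq_square by linarith
qed

section \<open>Roots of unity\<close>

lemma eq_smult_if_dvd_degree_le:
  fixes Q :: "'a::field poly"
  assumes "Q dvd p" "degree p \<le> degree Q"
  shows "\<exists>l. p = smult l Q"
proof (cases "p = 0")
  case False
  obtain s where s: "p = Q * s" using assms(1) by blast
  then have "degree s = 0" using False assms(2) by (auto simp: degree_mult_eq)
  then have "p = Q * [:coeff s 0:]" using s by (simp add: degree_0_id)
  then show ?thesis by (intro exI[of _ "coeff s 0"]) simp
qed auto

locale primitive_root_of_unity =
  fixes n :: nat and \<theta> :: "'b::field"
  assumes n_gt_1: "1 < n" and root_power_n: "\<theta> ^ n = 1"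
    and primitive: "\<And>k. 0 < k \<Longrightarrow> k < n \<Longrightarrow> \<theta> ^ k \<noteq> 1"
begin

lemma root_power_mod: "\<theta> ^ (m mod n) = \<theta> ^ m"
proof -
  have "\<theta> ^ m = \<theta> ^ (n * (m div n) + m mod n)" by simp
  also have "\<dots> = (\<theta> ^ n) ^ (m div n) * \<theta> ^ (m mod n)" by (simp only: power_add power_mult)
  finally show ?thesis using root_power_n by simp
qed

lemma root_nonzero: "\<theta> \<noteq> 0"
  using root_power_n n_gt_1 by (cases n) auto

lemma inj_on_root_powers: "inj_on (\<lambda>k. \<theta> ^ k) {..<n}"
proof -
  have "k = l" if "k \<le> l" "l < n" "\<theta> ^ k = \<theta> ^ l" for k l
  proof (rule ccontr)
    assume "k \<noteq> l"
    have "\<theta> ^ l = \<theta> ^ k * \<theta> ^ (l - k)" using that(1) by (simp flip: power_add)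
    then have "\<theta> ^ (l - k) = 1" using that(3) root_nonzero by simp
    then show False using primitive[of "l - k"] that(1,2) \<open>k \<noteq> l\<close> by simp
  qed
  then show ?thesis by (intro inj_onI) (metis lessThan_iff nle_le)
qed

lemma root_power_power_n: "(\<theta> ^ j) ^ n = 1"
  by (metis power_mult mult.commute root_power_n power_one)

lemma poly_xpow_minus_one_root_power: "poly (monom 1 n - 1) (\<theta> ^ j) = 0"
  by (simp add: poly_monom root_power_power_n)

lemma poly_all_ones_root_power:
  assumes "0 < j" "j < n"
  shows "poly (\<Sum>k<n. monom 1 k) (\<theta> ^ j) = 0"
  using geometric_sum[of "\<theta> ^ j" n] primitive[OF assms] root_power_power_n
  by (simp add: poly_sum poly_monom)

lemma eq_smult_all_ones_if_roots:
  assumes "degree R < n" "\<And>j. 0 < j \<Longrightarrow> j < n \<Longrightarrow> poly R (\<theta> ^ j) = 0"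
  obtains l where "R = smult l (\<Sum>k<n. monom 1 k)"
proof -
  let ?Q = "\<Prod>k\<in>{1..<n}. [:- (\<theta> ^ k), 1:]" and ?E = "\<Sum>k<n. monom (1::'b) k"
  have inj: "inj_on (\<lambda>k. \<theta> ^ k) {1..<n}" using inj_on_root_powers by (rule inj_on_subset) auto
  have dQ: "degree ?Q = n - 1" by (simp add: degree_prod_linear)
  have "?Q dvd R" using assms(2) by (intro prod_linear_dvd_of_roots[OF _ inj]) auto
  moreover have "degree R \<le> degree ?Q" using dQ assms(1) by simp
  ultimately obtain r where r: "R = smult r ?Q" using eq_smult_if_dvd_degree_le by blast
  have cE: "coeff ?E k = (if k < n then 1 else 0)" for k by (simp add: coeff_sum)
  have "?Q dvd ?E"
    using poly_all_ones_root_power by (intro prod_linear_dvd_of_roots[OF _ inj]) auto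
  moreover have "degree ?E \<le> degree ?Q" unfolding dQ by (rule degree_le) (auto simp: cE)
  ultimately obtain e where e: "?E = smult e ?Q" using eq_smult_if_dvd_degree_le by blast
  have "e \<noteq> 0" using cE[of 0] e n_gt_1 by auto
  then have "R = smult (r / e) ?E" using r e by simp
  then show ?thesis by (rule that)
qed

end

section \<open>Codes defined by roots of unity\<close>

interpretation poly_vs: vector_space "smult :: 'a::field \<Rightarrow> 'a poly \<Rightarrow> 'a poly"
  by unfold_locales (simp_all add: smult_add_right smult_add_left)

lemma smult_monom_mult: "smult a (monom 1 k * g) = monom a k * (g :: 'a::field poly)"
  by (simp add: smult_monom flip: mult_smult_left)

lemma multiples_degree_less_subset_span:
  fixes g :: "'a::field poly"
  shows "{b * g | b. degree b < m} \<subseteq> poly_vs.span ((\<lambda>k. monom 1 k * g) ` {..<m})"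
proof
  fix c assume "c \<in> {b * g | b. degree b < m}"
  then obtain b where b: "c = b * g" "degree b < m" by blast
  have "b = (\<Sum>k\<le>degree b. monom (coeff b k) k)" by (simp add: poly_as_sum_of_monoms)
  also have "\<dots> = (\<Sum>k<m. monom (coeff b k) k)"
    using b(2) by (intro sum.mono_neutral_left) (auto simp: coeff_eq_0)
  finally have "b * g = (\<Sum>k<m. monom (coeff b k) k) * g" by (rule arg_cong)
  then have "c = (\<Sum>k<m. monom (coeff b k) k) * g" using b(1) by (simp only:)
  also have "\<dots> = (\<Sum>k<m. smult (coeff b k) (monom 1 k * g))"
    by (simp only: smult_monom_mult sum_distrib_right)
  also have "\<dots> \<in> poly_vs.span ((\<lambda>k. monom 1 k * g) ` {..<m})"
    by (intro poly_vs.span_sum poly_vs.span_scale poly_vs.span_base) auto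
  finally show "c \<in> poly_vs.span ((\<lambda>k. monom 1 k * g) ` {..<m})" .
qed

lemma independent_monom_multiples:
  fixes g :: "'a::field poly"
  assumes "g \<noteq> 0"
  shows "poly_vs.independent ((\<lambda>k. monom 1 k * g) ` {..<m})"
proof (rule poly_vs.independent_if_scalars_zero)
  have inj: "inj_on (\<lambda>k. monom (1::'a) k * g) {..<m}"
    using assms by (intro inj_onI) (simp add: monom_eq_iff')
  fix u x assume sum0: "(\<Sum>x\<in>(\<lambda>k. monom 1 k * g) ` {..<m}. smult (u x) x) = 0"
    and x: "x \<in> (\<lambda>k. monom 1 k * g) ` {..<m}"
  have "(\<Sum>k<m. monom (u (monom 1 k * g)) k) * g = 0"
    using sum0 by (simp add: sum.reindex[OF inj] smult_monom_mult sum_distrib_right)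
  then have "coeff (\<Sum>k<m. monom (u (monom 1 k * g)) k) j = 0" for j using assms by simp
  then have "(if j < m then u (monom 1 j * g) else 0) = 0" for j by (simp add: coeff_sum)
  then have "u (monom 1 j * g) = 0" if "j < m" for j using that by presburger
  then show "u x = 0" using x by auto
qed simp

lemma dim_multiples_degree_less:
  fixes g :: "'a::field poly"
  assumes "g \<noteq> 0"
  shows "poly_vs.dim {b * g | b. degree b < m} = m"
proof -
  have "(\<lambda>k. monom 1 k * g) ` {..<m} \<subseteq> {b * g | b. degree b < m}"
    by (auto simp: degree_monom_eq)
  then have "card ((\<lambda>k. monom 1 k * g) ` {..<m}) = poly_vs.dim {b * g | b. degree b < m}"
    using multiples_degree_less_subset_span independent_monom_multiples[OF assms]
    by (rule poly_vs.basis_card_eq_dim)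
  moreover have "inj_on (\<lambda>k. monom (1::'a) k * g) {..<m}"
    using assms by (intro inj_onI) (simp add: monom_eq_iff')
  ultimately show ?thesis by (simp add: card_image)
qed

locale root_defined_code = field_embedding f + primitive_root_of_unity n \<theta>
  for f :: "'a::field \<Rightarrow> 'b::field" and n :: nat and \<theta> :: 'b +
  fixes Z :: "nat set" and gen :: "'a poly"
  assumes Z_bounds: "\<And>x. x \<in> Z \<Longrightarrow> 0 < x \<and> x < n"
    and map_poly_gen: "map_poly f gen = (\<Prod>k\<in>Z. [:- (\<theta> ^ k), 1:])"
begin

lemma finite_Z: "finite Z"
  by (rule finite_subset[of _ "{..<n}"]) (use Z_bounds in auto)

lemma gen_dvd_iff_roots: "gen dvd c \<longleftrightarrow> (\<forall>k\<in>Z. poly (map_poly f c) (\<theta> ^ k) = 0)"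
proof
  assume "gen dvd c"
  then obtain r where "c = gen * r" by blast
  then show "\<forall>k\<in>Z. poly (map_poly f c) (\<theta> ^ k) = 0"
    using finite_Z by (auto simp: map_poly_mult map_poly_gen poly_prod prod_zero_iff)
next
  assume "\<forall>k\<in>Z. poly (map_poly f c) (\<theta> ^ k) = 0"
  moreover have "inj_on (\<lambda>k. \<theta> ^ k) Z"
    using inj_on_root_powers by (rule inj_on_subset) (use Z_bounds in auto)
  ultimately have "map_poly f gen dvd map_poly f c"
    unfolding map_poly_gen using prod_linear_dvd_of_roots[OF finite_Z] by blast
  then show "gen dvd c" by (simp add: map_poly_dvd_iff)
qed

lemma gen_dvd_xpow_minus_one: "gen dvd monom 1 n - 1"
  using poly_xpow_minus_one_root_power by (simp add: gen_dvd_iff_roots map_poly_xpow_minus_one)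

lemma gen_nonzero: "gen \<noteq> 0"
  using map_poly_gen prod_linear_nonzero by (metis map_poly_0)

lemma degree_gen: "degree gen = card Z"
  using degree_map_poly_eq[of gen] map_poly_gen degree_prod_linear[OF finite_Z, of "\<lambda>k. \<theta> ^ k"]
  by simp

lemma card_Z_less: "card Z < n"
proof -
  have "Z \<subseteq> {1..<n}" using Z_bounds by (auto simp: Suc_le_eq)
  then show ?thesis using card_mono[of "{1..<n}" Z] n_gt_1 by simp
qed

text \<open>With \<open>x^n - 1 = gen * H\<close>, the reduction of \<open>a * gen\<close> is \<open>(a mod H) * gen\<close>.\<close>

lemma cyclic_code_eq: "cyclic_code n gen = {b * gen | b. degree b < n - card Z}"
proof (intro equalityI subsetI)
  obtain H where H: "monom 1 n - 1 = gen * H" using gen_dvd_xpow_minus_one by blast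
  have dX: "degree (monom (1::'a) n - 1) = n" using n_gt_1 by (simp add: degree_xpow_minus_one)
  have "H \<noteq> 0" using H dX n_gt_1 by auto
  then have "card Z + degree H = n" using H dX gen_nonzero by (simp add: degree_mult_eq degree_gen)
  then have dH: "degree H = n - card Z" by simp
  fix c assume "c \<in> cyclic_code n gen"
  then obtain a where c: "c = (a * gen) mod (monom 1 n - 1)" unfolding cyclic_code_def by blast
  have "a * gen = (a mod H) * gen + (monom 1 n - 1) * (a div H)"
    unfolding H by (metis div_mult_mod_eq distrib_right mult.commute mult.left_commute add.commute)
  then have "c = ((a mod H) * gen) mod (monom 1 n - 1)" unfolding c by (metis mod_mult_self2)
  also have "\<dots> = (a mod H) * gen"
  proof (cases "a mod H = 0")
    case False
    then have "degree (a mod H) < degree H" using degree_mod_less[OF \<open>H \<noteq> 0\<close>] by blast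
    then show ?thesis
      using False gen_nonzero \<open>H \<noteq> 0\<close> unfolding H by (intro mod_poly_less) (simp add: degree_mult_eq)
  qed simp
  finally show "c \<in> {b * gen | b. degree b < n - card Z}"
    using degree_mod_less[OF \<open>H \<noteq> 0\<close>, of a] dH card_Z_less by (cases "a mod H = 0") auto
next
  fix c assume "c \<in> {b * gen | b. degree b < n - card Z}"
  then obtain b where b: "c = b * gen" "degree b < n - card Z" by blast
  have "(b * gen) mod (monom 1 n - 1) = b * gen"
  proof (cases "b = 0")
    case False
    then show ?thesis
      using b(2) gen_nonzero n_gt_1
      by (intro mod_poly_less) (simp add: degree_mult_eq degree_gen degree_xpow_minus_one)
  qed simp
  then show "c \<in> cyclic_code n gen" unfolding cyclic_code_def b by (metis (mono_tags, lifting) mem_Collect_eq)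
qed

lemma degree_codeword_less:
  assumes "c \<in> cyclic_code n gen"
  shows "degree c < n"
proof -
  obtain b where b: "c = b * gen" "degree b < n - card Z" using assms unfolding cyclic_code_eq by blast
  show ?thesis
  proof (cases "b = 0")
    case False
    then show ?thesis using b gen_nonzero by (simp add: degree_mult_eq degree_gen)
  qed (use b n_gt_1 in simp)
qed

lemma code_dim_cyclic_code: "code_dim (cyclic_code n gen) = n - card Z"
  unfolding code_dim_def cyclic_code_eq using dim_multiples_degree_less[OF gen_nonzero] .

lemma gen_in_cyclic_code: "gen \<in> cyclic_code n gen"
  unfolding cyclic_code_eq using card_Z_less by (intro CollectI exI[of _ 1]) simp

lemma odd_like_gen: "odd_like n gen"
proof -
  have "(\<Sum>i<n. coeff gen i) = poly gen 1"
    using poly_eq_sum_lessThan[of gen n 1] card_Z_less by (simp add: degree_gen)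
  moreover have "poly gen 1 \<noteq> 0"
  proof
    assume "poly gen 1 = 0"
    then have "(\<Prod>k\<in>Z. 1 - \<theta> ^ k) = 0"
      using poly_map_poly_hom[of gen 1] by (simp add: hom_0 hom_1 map_poly_gen poly_prod)
    then obtain k where "k \<in> Z" "\<theta> ^ k = 1" using finite_Z by (auto simp: prod_zero_iff)
    then show False using Z_bounds primitive by blast
  qed
  ultimately show ?thesis unfolding odd_like_def by simp
qed

lemma poly_dilate_root_power:
  assumes "degree c < n"
  shows "poly (map_poly f (dilate n a c)) (\<theta> ^ j) = poly (map_poly f c) (\<theta> ^ ((a * j) mod n))"
proof -
  have "(\<theta> ^ j) ^ ((a * k) mod n) = (\<theta> ^ ((a * j) mod n)) ^ k" for k
  proof -
    have "(\<theta> ^ j) ^ ((a * k) mod n) = \<theta> ^ (((a * k) mod n) * j)" by (simp add: power_mult mult.commute)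
    also have "\<dots> = \<theta> ^ (((a * j) mod n) * k)"
      by (metis root_power_mod mod_mult_left_eq mult.commute mult.left_commute)
    finally show ?thesis by (simp add: power_mult)
  qed
  then have "poly (map_poly f (dilate n a c)) (\<theta> ^ j) = (\<Sum>k<n. f (coeff c k) * (\<theta> ^ ((a * j) mod n)) ^ k)"
    by (simp add: dilate_def map_poly_sum map_poly_monom hom_0 poly_sum poly_monom)
  also have "\<dots> = poly (map_poly f c) (\<theta> ^ ((a * j) mod n))"
    using poly_eq_sum_lessThan[of "map_poly f c" n] assms
    by (simp add: degree_map_poly_eq coeff_map_poly hom_0)
  finally show ?thesis .
qed

definition multiplier_covers :: "nat \<Rightarrow> bool" where
  "multiplier_covers a \<longleftrightarrow> (\<forall>x. 0 < x \<and> x < n \<longrightarrow> x \<in> Z \<or> (a * x) mod n \<in> Z)"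

lemma poly_mult_dilate_root_power:
  assumes "multiplier_covers a" "c \<in> cyclic_code n gen" "0 < j" "j < n"
  shows "poly (map_poly f (c * dilate n a c mod (monom 1 n - 1))) (\<theta> ^ j) = 0"
proof -
  have "gen dvd c" using assms(2) unfolding cyclic_code_eq by auto
  then have roots: "poly (map_poly f c) (\<theta> ^ k) = 0" if "k \<in> Z" for k
    using that gen_dvd_iff_roots by blast
  have "poly (map_poly f (c * dilate n a c mod (monom 1 n - 1))) (\<theta> ^ j)
      = poly (map_poly f c) (\<theta> ^ j) * poly (map_poly f c) (\<theta> ^ ((a * j) mod n))"
    using poly_dilate_root_power[OF degree_codeword_less[OF assms(2)]] poly_xpow_minus_one_root_power
    by (simp add: map_poly_mod map_poly_mult map_poly_xpow_minus_one poly_mod)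
  then show ?thesis using assms(1,3,4) roots unfolding multiplier_covers_def by auto
qed

lemma poly_mult_dilate_at_one:
  assumes "odd_like n c" "degree c < n"
  shows "poly (c * dilate n a c mod (monom 1 n - 1)) 1 \<noteq> 0"
proof -
  have "poly c 1 = (\<Sum>i<n. coeff c i)" "poly (dilate n a c) 1 = (\<Sum>i<n. coeff c i)"
    using poly_eq_sum_lessThan[OF assms(2), of 1] by (simp_all add: dilate_def poly_sum poly_monom)
  moreover have "poly (c * dilate n a c mod (monom 1 n - 1)) 1 = poly (c * dilate n a c) 1"
    by (rule poly_mod) (simp add: poly_monom)
  ultimately show ?thesis using assms(1) by (simp add: odd_like_def)
qed

text \<open>Since \<open>c(x) c(x^a)\<close> vanishes at all nontrivial \<open>n\<close>-th roots of unity but not at \<open>1\<close>,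
  it is a nonzero multiple of \<open>1 + x + ... + x^(n-1)\<close>.\<close>

lemma hweight_mult_dilate_eq:
  assumes "multiplier_covers a" "c \<in> cyclic_code n gen" "odd_like n c"
  shows "hweight n (c * dilate n a c mod (monom 1 n - 1)) = n"
proof -
  let ?r = "c * dilate n a c mod (monom 1 n - 1)"
  have "?r \<noteq> 0"
    using poly_mult_dilate_at_one[OF assms(3) degree_codeword_less[OF assms(2)], of a] by (metis poly_0)
  moreover have "degree (monom (1::'a) n - 1) = n" using n_gt_1 by (simp add: degree_xpow_minus_one)
  ultimately have "degree ?r < n"
    using degree_mod_less[of "monom 1 n - 1" ?r] n_gt_1 by (metis degree_mod_less not_less_zero degree_0)
  then obtain l where l: "map_poly f ?r = smult l (\<Sum>k<n. monom 1 k)"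
    using poly_mult_dilate_root_power[OF assms(1,2)]
    by (metis eq_smult_all_ones_if_roots degree_map_poly_eq)
  have "f (poly ?r 1) \<noteq> 0"
    using poly_mult_dilate_at_one[OF assms(3) degree_codeword_less[OF assms(2)]] hom_eq_0_iff by blast
  then have "l \<noteq> 0" using poly_map_poly_hom[of ?r 1] l hom_1 by auto
  then have "coeff ?r k \<noteq> 0" if "k < n" for k
    using arg_cong[OF l, of "\<lambda>p. coeff p k"] that
    by (simp add: coeff_map_poly hom_0 coeff_sum) (metis hom_0)
  then show ?thesis unfolding hweight_def by (metis (mono_tags, lifting) card_lessThan lessThan_def Collect_cong)
qed

lemma min_odd_like_weight_attained:
  obtains c where "c \<in> cyclic_code n gen" "odd_like n c"
    "hweight n c = min_odd_like_weight n (cyclic_code n gen)"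
proof -
  let ?W = "{hweight n c | c. c \<in> cyclic_code n gen \<and> odd_like n c}"
  have "?W \<subseteq> {..n}" by (auto simp: hweight_def intro: order.trans[OF card_mono[of "{..<n}"]])
  then have "finite ?W" by (rule finite_subset) simp
  moreover have "?W \<noteq> {}" using gen_in_cyclic_code odd_like_gen by blast
  ultimately have "Min ?W \<in> ?W" by (rule Min_in)
  then obtain c where c: "c \<in> cyclic_code n gen" "odd_like n c" "hweight n c = Min ?W" by auto
  show ?thesis by (rule that[OF c(1,2) c(3)[folded min_odd_like_weight_def]])
qed

lemma sqrt_le_min_odd_like_weight:
  assumes "multiplier_covers a"
  shows "sqrt (real n) \<le> real (min_odd_like_weight n (cyclic_code n gen))"
proof -
  obtain c where c: "c \<in> cyclic_code n gen" "odd_like n c"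
    "hweight n c = min_odd_like_weight n (cyclic_code n gen)"
    by (rule min_odd_like_weight_attained)
  then have "n \<le> min_odd_like_weight n (cyclic_code n gen) ^ 2"
    using hweight_mult_dilate_eq[OF assms c(1,2)] hweight_mult_dilate_le[of n c a]
      degree_codeword_less[OF c(1)] n_gt_1 by simp
  then have "real n \<le> real (min_odd_like_weight n (cyclic_code n gen)) ^ 2"
    unfolding of_nat_power[symmetric] of_nat_le_iff .
  then show ?thesis by (rule real_le_lsqrt[rotated]) simp
qed

lemma min_odd_like_weight_square_bound:
  assumes "multiplier_covers (n - 1)"
  defines "d \<equiv> min_odd_like_weight n (cyclic_code n gen)"
  shows "int n \<le> int d ^ 2 - int d + 1"
proof -
  obtain c where c: "c \<in> cyclic_code n gen" "odd_like n c" "hweight n c = d"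
    unfolding d_def by (rule min_odd_like_weight_attained)
  then have "n + d \<le> d ^ 2 + 1"
    using hweight_mult_dilate_eq[OF assms(1) c(1,2)] hweight_mult_reverse_le[of n c]
      degree_codeword_less[OF c(1)] n_gt_1 by simp
  then have "int (n + d) \<le> int (d ^ 2 + 1)" by (simp only: of_nat_le_iff)
  then show ?thesis unfolding of_nat_add of_nat_power of_nat_1 by linarith
qed

end

theorem mainTheorem9:
  fixes n1 n2 q g1 g2 g \<nu> :: nat
    and f :: "'a::{field,finite} \<Rightarrow> 'b::{field,finite}"
    and \<theta> :: 'b
    and gen :: "nat \<Rightarrow> nat \<Rightarrow> nat \<Rightarrow> 'a poly"
  assumes "prime n1" "prime n2" "odd n1" "odd n2" "n1 \<noteq> n2"
    and "\<exists>p k. prime p \<and> k > 0 \<and> q = p ^ k"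
    and "card (UNIV :: 'a set) = q"
    and "coprime q (n1 * n2)"
    and "residue_primroot n1 g1" "residue_primroot n2 g2"
    and "[g = g1] (mod n1)" "[g = g2] (mod n2)"
    and "[\<nu> = g] (mod n1)" "[\<nu> = 1] (mod n2)"
    \<comment> \<open>GF(q^N) with N = ord_n(q), containing GF(q) via the field embedding f\<close>
    and "card (UNIV :: 'b set) = q ^ ord (n1 * n2) q"
    and "inj f" "f 0 = 0" "f 1 = 1"
    and "\<And>x y. f (x + y) = f x + f y" "\<And>x y. f (x * y) = f x * f y"
    \<comment> \<open>\<theta> a primitive n-th root of unity\<close>
    and "\<theta> ^ (n1 * n2) = 1" "\<And>k. 0 < k \<Longrightarrow> k < n1 * n2 \<Longrightarrow> \<theta> ^ k \<noteq> 1"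
    \<comment> \<open>q \<in> D_0 and q is a quadratic residue mod n1 and mod n2\<close>
    and "q mod (n1 * n2) \<in> Dset n1 n2 g \<nu> 0"
    and "QuadRes (int n1) (int (q mod n1))" "QuadRes (int n2) (int (q mod n2))"
    \<comment> \<open>gen i j h is the polynomial over GF(q) equal to d_i(x) d_j^(n1)(x) d_h^(n2)(x)\<close>
    and "\<And>i j h. i \<in> {0,1} \<Longrightarrow> j \<in> {0,1} \<Longrightarrow> h \<in> {0,1} \<Longrightarrow>
           map_poly f (gen i j h) =
             rootprod \<theta> (Dset n1 n2 g \<nu> i) 1 * rootprod \<theta> (QRset n1 j) n2
               * rootprod \<theta> (QRset n2 h) n1"
  shows "\<forall>i\<in>{0,1}. \<forall>j\<in>{0,1}. \<forall>h\<in>{0,1}.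
           let C = cyclic_code (n1 * n2) (gen i j h); dw = min_odd_like_weight (n1 * n2) C in
           (\<forall>c\<in>C. degree c < n1 * n2)
           \<and> code_dim C = (n1 * n2 + 1) div 2
           \<and> (\<exists>c\<in>C. odd_like (n1 * n2) c)
           \<and> real dw \<ge> sqrt (real (n1 * n2))
           \<and> (n1 mod 8 = 7 \<and> n2 mod 8 = 7 \<longrightarrow> int dw ^ 2 - int dw + 1 \<ge> int (n1 * n2))"
proof (intro ballI)
  interpret D: generalized_cyclotomy n1 n2 g1 g2 g \<nu>
    by unfold_locales (use assms in auto)
  fix i j h :: nat assume ijh: "i \<in> {0, 1}" "j \<in> {0, 1}" "h \<in> {0, 1}"
  interpret C: root_defined_code f "n1 * n2" \<theta> "defining_set n1 n2 g \<nu> i j h" "gen i j h"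
    using assms(16-22) D.n1_n2_gt_1 D.defining_set_bounds[OF ijh(1)]
      D.rootprod_defining_set[OF ijh(1)] assms(26)[OF ijh]
    by unfold_locales auto
  have "C.multiplier_covers g"
    using D.defining_set_multiplier[OF ijh D.coprime_g D.Legendre_n1_g D.Legendre_n2_g]
    unfolding C.multiplier_covers_def by blast
  moreover have "C.multiplier_covers (n1 * n2 - 1)" if "n1 mod 8 = 7" "n2 mod 8 = 7"
    using that mod_mod_cancel[of 4 8 n1] mod_mod_cancel[of 4 8 n2]
      D.defining_set_multiplier_minus_one[OF ijh] unfolding C.multiplier_covers_def by simp
  moreover have "code_dim (cyclic_code (n1 * n2) (gen i j h)) = (n1 * n2 + 1) div 2"
    using C.code_dim_cyclic_code D.card_defining_set[OF ijh] by simp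
  ultimately show "let C = cyclic_code (n1 * n2) (gen i j h); dw = min_odd_like_weight (n1 * n2) C in
           (\<forall>c\<in>C. degree c < n1 * n2)
           \<and> code_dim C = (n1 * n2 + 1) div 2
           \<and> (\<exists>c\<in>C. odd_like (n1 * n2) c)
           \<and> real dw \<ge> sqrt (real (n1 * n2))
           \<and> (n1 mod 8 = 7 \<and> n2 mod 8 = 7 \<longrightarrow> int dw ^ 2 - int dw + 1 \<ge> int (n1 * n2))"
    using C.degree_codeword_less C.gen_in_cyclic_code C.odd_like_gen
      C.sqrt_le_min_odd_like_weight C.min_odd_like_weight_square_bound
    unfolding Let_def by blast
qed

end
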